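(* Let $d_t(n)=PPL_t(n+1)-PPL_t(n)$ for $n\geq 0$. Then $d_t(n)\in\{-1,0,1\}$ for all $n$, and the sequence $(d_t(n))_{n\geq 0}$ is the fixed point (starting with $1$) of the $4$-uniform morphism $\delta$ on the alphabet $\{-1,0,1\}$ given by \[\delta(1)=(1,1,0,-1),\quad \delta(0)=(1,1,-1,-1),\quad \delta(-1)=(1,0,-1,-1);\] that is, $(d_t(4n),d_t(4n+1),d_t(4n+2),d_t(4n+3))=\delta(d_t(n))$ for all $n\geq 0$, and $d_t(0)=1$.
   Context: The Thue-Morse word $t=t[1]t[2]\cdots=abbabaabbaababba\cdots$ is the fixed point starting with $a$ of the morphism $a\mapsto abba,\ b\mapsto baab$. A palindrome is a word $p=p[1]\cdots p[n]$ with $p[i]=p[n-i+1]$ for all $i$. $PPL_t(n)$ is the minimal number of nonempty palindromes whose concatenation equals the prefix of $t$ of length $n$, with $PPL_t(0)=0$. *)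

theory Defs
  imports Main
begin

datatype letter = LA | LB

fun tm_morph :: "letter \<Rightarrow> letter list" where
  "tm_morph LA = [LA, LB, LB, LA]"
| "tm_morph LB = [LB, LA, LA, LB]"

definition tm_morph_word :: "letter list \<Rightarrow> letter list" where
  "tm_morph_word w = concat (map tm_morph w)"

text \<open>k-th iterate of the morphism applied to a; each is a prefix of the next,
  and the fixed point t starting with a is their limit.\<close>
fun tm_iter :: "nat \<Rightarrow> letter list" where
  "tm_iter 0 = [LA]"
| "tm_iter (Suc k) = tm_morph_word (tm_iter k)"

text \<open>Prefix of t of length n (tm_iter n has length 4^n \<ge> n).\<close>
definition tm_prefix :: "nat \<Rightarrow> letter list" where
  "tm_prefix n = take n (tm_iter n)"

definition palindrome :: "'a list \<Rightarrow> bool" where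
  "palindrome p \<longleftrightarrow> rev p = p"

definition PPL_t :: "nat \<Rightarrow> nat" where
  "PPL_t n = (LEAST k. \<exists>ps. length ps = k \<and> (\<forall>p\<in>set ps. p \<noteq> [] \<and> palindrome p)
                          \<and> concat ps = tm_prefix n)"

definition d_t :: "nat \<Rightarrow> int" where
  "d_t n = int (PPL_t (n + 1)) - int (PPL_t n)"

definition delta :: "int \<Rightarrow> int list" where
  "delta x = (if x = 1 then [1, 1, 0, -1]
              else if x = 0 then [1, 1, -1, -1]
              else if x = -1 then [1, 0, -1, -1]
              else [])"

end

theory Submission
  imports Defs
begin

text \<open>
  Write t[n+1] = b iff the binary digit sum of n is odd. A palindromic factor t[i+1..m] of length
  other than 1 and 3 has 4 dividing i + m: the two middle letters t[p+1], t[p+2] of an even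
  palindrome are equal, which forces p to be odd, and an odd palindrome of length at least 5
  would have a central palindrome of length 5, which t does not contain. For such
  factors, t[4j+r+1..4n-r] is a palindrome iff t[j+1..n] is one, because positions 4q + s and
  4q' + 3 - s carry equal letters iff q and q' do. Classifying the last palindrome of an optimal
  factorisation of the prefix of length 4n + r, and lifting the last palindrome of an optimal
  factorisation of the prefix of length n or n + 1, gives by strong induction
  PPL(4n) = PPL(n), PPL(4n+1) = PPL(n) + 1, PPL(4n+2) = min(PPL(n), PPL(n+1)) + 2 and
  PPL(4n+3) = PPL(n+1) + 1. Together with |PPL(m+1) - PPL(m)| <= 1 this is the morphism delta.
\<close>

section \<open>Palindromic length of a word\<close>

definition pal_factorization :: "'a list list \<Rightarrow> 'a list \<Rightarrow> bool" where
  "pal_factorization ps w \<longleftrightarrow> (\<forall>p\<in>set ps. p \<noteq> [] \<and> palindrome p) \<and> concat ps = w"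

definition pal_length :: "'a list \<Rightarrow> nat" where
  "pal_length w = (LEAST k. \<exists>ps. length ps = k \<and> pal_factorization ps w)"

lemma pal_length_le: "pal_factorization ps w \<Longrightarrow> pal_length w \<le> length ps"
  unfolding pal_length_def by (rule Least_le) blast

lemma pal_length_attained:
  obtains ps where "length ps = pal_length w" "pal_factorization ps w"
proof -
  have "pal_factorization (map (\<lambda>x. [x]) w) w"
    by (auto simp: pal_factorization_def palindrome_def map_idI)
  then have "\<exists>k ps. length ps = k \<and> pal_factorization ps w" by blast
  then have "\<exists>ps. length ps = pal_length w \<and> pal_factorization ps w"
    unfolding pal_length_def by (rule LeastI_ex)
  with that show ?thesis by blast
qed

lemma pal_length_append_palindrome:
  assumes "s \<noteq> []" "palindrome s"
  shows "pal_length (u @ s) \<le> pal_length u + 1"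
proof -
  obtain ps where "length ps = pal_length u" "pal_factorization ps u"
    by (rule pal_length_attained)
  with assms have "pal_factorization (ps @ [s]) (u @ s)"
    by (auto simp: pal_factorization_def)
  then have "pal_length (u @ s) \<le> length (ps @ [s])"
    by (rule pal_length_le)
  with \<open>length ps = pal_length u\<close> show ?thesis by simp
qed

lemma pal_length_last_palindrome:
  assumes "w \<noteq> []"
  obtains u s where "w = u @ s" "s \<noteq> []" "palindrome s" "pal_length w = pal_length u + 1"
proof -
  obtain ps where ps: "length ps = pal_length w" "pal_factorization ps w"
    by (rule pal_length_attained)
  with assms have "ps \<noteq> []" by (auto simp: pal_factorization_def)
  then obtain qs s where qs: "ps = qs @ [s]"
    by (cases ps rule: rev_exhaust) auto
  with ps have s: "s \<noteq> []" "palindrome s" and w: "w = concat qs @ s"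
    and qs_fact: "pal_factorization qs (concat qs)"
    by (auto simp: pal_factorization_def)
  from qs_fact have "pal_length (concat qs) \<le> length qs"
    by (rule pal_length_le)
  moreover have "pal_length w \<le> pal_length (concat qs) + 1"
    using pal_length_append_palindrome [OF s] w by blast
  ultimately have "pal_length w = pal_length (concat qs) + 1"
    using ps qs by simp
  with w s show ?thesis by (rule that)
qed

section \<open>The Thue-Morse word\<close>

text \<open>Positions are counted from 0: tm_letter n is the letter t[n+1] of the paper, and it is b
  iff tm_bit n, the parity of the binary digit sum of n, holds.\<close>

fun tm_bit :: "nat \<Rightarrow> bool" where
  "tm_bit n = (if n = 0 then False else if even n then tm_bit (n div 2) else \<not> tm_bit (n div 2))"

declare tm_bit.simps [simp del]

lemma tm_bit_0 [simp]: "tm_bit 0 = False"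
  by (simp add: tm_bit.simps)

lemma tm_bit_double [simp]: "tm_bit (2 * q) = tm_bit q"
  by (cases "q = 0") (simp_all add: tm_bit.simps [of "2 * q"])

lemma tm_bit_double_Suc [simp]: "tm_bit (Suc (2 * q)) = (\<not> tm_bit q)"
  by (simp add: tm_bit.simps [of "Suc (2 * q)"])

lemma tm_bit_mult4:
  "tm_bit (4 * q) = tm_bit q" "tm_bit (4 * q + 1) = (\<not> tm_bit q)"
  "tm_bit (4 * q + 2) = (\<not> tm_bit q)" "tm_bit (4 * q + 3) = tm_bit q"
proof -
  have "4 * q = 2 * (2 * q)" "4 * q + 1 = Suc (2 * (2 * q))"
    "4 * q + 2 = 2 * Suc (2 * q)" "4 * q + 3 = Suc (2 * Suc (2 * q))"
    by simp_all
  then show "tm_bit (4 * q) = tm_bit q" "tm_bit (4 * q + 1) = (\<not> tm_bit q)"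
    "tm_bit (4 * q + 2) = (\<not> tm_bit q)" "tm_bit (4 * q + 3) = tm_bit q"
    by (simp_all only: tm_bit_double tm_bit_double_Suc not_not)
qed

lemma tm_bit_mult4_add:
  assumes "s < 4"
  shows "tm_bit (4 * q + s) = (tm_bit q \<noteq> (s = 1 \<or> s = 2))"
proof -
  from assms consider "s = 0" | "s = 1" | "s = 2" | "s = 3" by linarith
  then show ?thesis by cases (use tm_bit_mult4 [of q] in simp_all)
qed

lemma tm_bit_reflect4:
  assumes "s < 4"
  shows "tm_bit (4 * q + s) = tm_bit (4 * q' + (3 - s)) \<longleftrightarrow> tm_bit q = tm_bit q'"
  using assms tm_bit_mult4_add [of s q] tm_bit_mult4_add [of "3 - s" q'] by auto

lemma odd_if_tm_bit_eq_Suc: "tm_bit p = tm_bit (Suc p) \<Longrightarrow> odd p"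
  by (auto elim: evenE)

lemma tm_bit_no_triple: "\<not> (tm_bit p = tm_bit (p + 1) \<and> tm_bit (p + 1) = tm_bit (p + 2))"
  using odd_if_tm_bit_eq_Suc [of p] odd_if_tm_bit_eq_Suc [of "p + 1"] by auto

definition tm_letter :: "nat \<Rightarrow> letter" where
  "tm_letter n = (if tm_bit n then LB else LA)"

lemma tm_morph_tm_letter: "tm_morph (tm_letter n) = map tm_letter [4 * n..<4 * n + 4]"
proof -
  have "[4 * n..<4 * n + 4] = [4 * n, 4 * n + 1, 4 * n + 2, 4 * n + 3]"
    by (simp add: upt_rec)
  then show ?thesis
    by (simp only: list.map tm_letter_def tm_bit_mult4) simp
qed

lemma tm_morph_word_prefix: "tm_morph_word (map tm_letter [0..<N]) = map tm_letter [0..<4 * N]"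
proof (induction N)
  case 0
  then show ?case by (simp add: tm_morph_word_def)
next
  case (Suc N)
  have "[0..<4 * Suc N] = [0..<4 * N] @ [4 * N..<4 * N + 4]"
    unfolding mult_Suc_right add.commute [of 4] by (rule upt_add_eq_append) simp
  with Suc.IH show ?case
    by (simp add: tm_morph_word_def tm_morph_tm_letter)
qed

lemma tm_iter_eq: "tm_iter k = map tm_letter [0..<4 ^ k]"
proof (induction k)
  case 0
  show ?case by (simp add: tm_letter_def)
next
  case (Suc k)
  then show ?case by (simp add: tm_morph_word_prefix)
qed

lemma tm_prefix_eq: "tm_prefix n = map tm_letter [0..<n]"
proof -
  have "n \<le> 4 ^ n"
    using less_exp [of n] power_mono [of "2::nat" 4 n] by linarith
  then show ?thesis
    unfolding tm_prefix_def tm_iter_eq by (simp add: take_map)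
qed

section \<open>Palindromic factors of the Thue-Morse word\<close>

definition tm_pal :: "nat \<Rightarrow> nat \<Rightarrow> bool" where
  "tm_pal i m \<longleftrightarrow> (\<forall>p. i \<le> p \<longrightarrow> p < m \<longrightarrow> tm_bit p = tm_bit (i + m - 1 - p))"

lemma tm_palI:
  "(\<And>p. i \<le> p \<Longrightarrow> p < m \<Longrightarrow> tm_bit p = tm_bit (i + m - 1 - p)) \<Longrightarrow> tm_pal i m"
  unfolding tm_pal_def by blast

lemma tm_palD: "tm_pal i m \<Longrightarrow> i \<le> p \<Longrightarrow> p < m \<Longrightarrow> tm_bit p = tm_bit (i + m - 1 - p)"
  unfolding tm_pal_def by blast

lemma palindrome_tm_factor: "palindrome (map tm_letter [i..<m]) \<longleftrightarrow> tm_pal i m"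
proof -
  have "palindrome (map tm_letter [i..<m]) \<longleftrightarrow> (\<forall>k<m - i. tm_letter (m - 1 - k) = tm_letter (i + k))"
    by (auto simp: palindrome_def list_eq_iff_nth_eq rev_nth)
  also have "\<dots> \<longleftrightarrow> (\<forall>k<m - i. tm_bit (i + k) = tm_bit (m - 1 - k))"
    by (auto simp: tm_letter_def split: if_splits)
  also have "\<dots> \<longleftrightarrow> tm_pal i m"
  proof
    assume pal: "\<forall>k<m - i. tm_bit (i + k) = tm_bit (m - 1 - k)"
    show "tm_pal i m"
    proof (rule tm_palI)
      fix p assume "i \<le> p" "p < m"
      then have "p - i < m - i" "i + (p - i) = p" "m - 1 - (p - i) = i + m - 1 - p" by linarith+
      with pal show "tm_bit p = tm_bit (i + m - 1 - p)" by metis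
    qed
  next
    assume pal: "tm_pal i m"
    show "\<forall>k<m - i. tm_bit (i + k) = tm_bit (m - 1 - k)"
    proof (intro allI impI)
      fix k assume "k < m - i"
      then have "i \<le> i + k" "i + k < m" "i + m - 1 - (i + k) = m - 1 - k" by linarith+
      with tm_palD [OF pal] show "tm_bit (i + k) = tm_bit (m - 1 - k)" by metis
    qed
  qed
  finally show ?thesis .
qed

lemma tm_pal_central:
  assumes pal: "tm_pal i m" and "i \<le> i'" "i' + m' = i + m"
  shows "tm_pal i' m'"
proof (rule tm_palI)
  fix p assume "i' \<le> p" "p < m'"
  with assms(2,3) have "i \<le> p" "p < m" "i' + m' - 1 - p = i + m - 1 - p" by linarith+
  with tm_palD [OF pal, of p] show "tm_bit p = tm_bit (i' + m' - 1 - p)" by simp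
qed

lemma tm_pal_Suc: "tm_pal m (Suc m)"
proof (rule tm_palI)
  fix p assume "m \<le> p" "p < Suc m"
  then have "p = m" by simp
  then show "tm_bit p = tm_bit (m + Suc m - 1 - p)" by simp
qed

lemma tm_pal_length3_mod4: "tm_pal i (i + 3) \<Longrightarrow> i mod 4 = 2 \<or> i mod 4 = 3"
proof (rule ccontr)
  assume pal: "tm_pal i (i + 3)" and "\<not> (i mod 4 = 2 \<or> i mod 4 = 3)"
  then have s: "i mod 4 = 0 \<or> i mod 4 = 1" by linarith
  have "tm_bit i = tm_bit (i + 2)"
    using tm_palD [OF pal, of i] by simp
  moreover have "i = 4 * (i div 4) + i mod 4" "i + 2 = 4 * (i div 4) + (i mod 4 + 2)" by simp_all
  ultimately have "tm_bit (4 * (i div 4) + i mod 4) = tm_bit (4 * (i div 4) + (i mod 4 + 2))"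
    by metis
  with s show False
    using tm_bit_mult4_add [of "i mod 4" "i div 4"] tm_bit_mult4_add [of "i mod 4 + 2" "i div 4"]
    by auto
qed

lemma not_tm_pal_length5: "\<not> tm_pal p (p + 5)"
proof
  assume pal5: "tm_pal p (p + 5)"
  have pal: "tm_bit p = tm_bit (p + 4)" "tm_bit (p + 1) = tm_bit (p + 3)"
    using tm_palD [OF pal5, of p] tm_palD [OF pal5, of "p + 1"] by simp_all
  show False
  proof (cases "even p")
    case True
    then obtain q where "p = 2 * q" by blast
    then have "p = 2 * q" "p + 1 = Suc (2 * q)" "p + 3 = Suc (2 * (q + 1))" "p + 4 = 2 * (q + 2)"
      by simp_all
    with pal have "tm_bit q = tm_bit (q + 2)" "tm_bit q = tm_bit (q + 1)"
      by (metis tm_bit_double tm_bit_double_Suc)+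
    with tm_bit_no_triple [of q] show False by simp
  next
    case False
    then obtain q where "p = 2 * q + 1" by (rule oddE)
    then have "p = Suc (2 * q)" "p + 1 = 2 * (q + 1)" "p + 3 = 2 * (q + 2)" "p + 4 = Suc (2 * (q + 2))"
      by simp_all
    with pal have "tm_bit q = tm_bit (q + 2)" "tm_bit (q + 1) = tm_bit (q + 2)"
      by (metis tm_bit_double tm_bit_double_Suc)+
    with tm_bit_no_triple [of q] show False by simp
  qed
qed

lemma tm_pal_cases:
  assumes pal: "tm_pal i m" and "i < m"
  obtains "m = i + 1" | "m = i + 3" "i mod 4 = 2 \<or> i mod 4 = 3" | "4 dvd i + m"
proof -
  have "\<exists>h. m = i + 2 * h \<or> m = i + 2 * h + 1"
    using \<open>i < m\<close> by presburger
  then obtain h where "m = i + 2 * h \<or> m = i + 2 * h + 1" by blast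
  with \<open>i < m\<close> consider (even) "m = i + 2 * h" "h \<ge> 1" | (odd) "m = i + 2 * h + 1"
    by fastforce
  then show thesis
  proof cases
    case even
    then have "tm_pal (i + h - 1) (i + h + 1)"
      by (intro tm_pal_central [OF pal]) simp_all
    then have "tm_bit (i + h - 1) = tm_bit (Suc (i + h - 1))"
      using tm_palD [of "i + h - 1" "i + h + 1" "i + h - 1"] \<open>h \<ge> 1\<close> by simp
    then have "odd (i + h - 1)" by (rule odd_if_tm_bit_eq_Suc)
    with even \<open>i < m\<close> have "4 dvd i + m" by presburger
    then show thesis by (rule that)
  next
    case odd
    consider "h = 0" | "h = 1" | "h \<ge> 2" by linarith
    then show thesis
    proof cases
      case 1
      with odd show thesis by (intro that(1)) simp
    next
      case 2
      with odd have "m = i + 3" by simp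
      moreover from this pal have "i mod 4 = 2 \<or> i mod 4 = 3"
        using tm_pal_length3_mod4 by blast
      ultimately show thesis by (rule that(2))
    next
      case 3
      with odd have "tm_pal (i + h - 2) (i + h - 2 + 5)"
        by (intro tm_pal_central [OF pal]) simp_all
      with not_tm_pal_length5 show thesis by blast
    qed
  qed
qed

lemma tm_bit_mirror_blocks:
  assumes "r < 4" "m + r = 4 * n" "4 * j + r \<le> p" "p < m"
  shows "j \<le> p div 4" "p div 4 < n"
    "tm_bit p = tm_bit (4 * j + r + m - 1 - p) \<longleftrightarrow>
     tm_bit (p div 4) = tm_bit (j + n - 1 - p div 4)"
proof -
  define q s where "q = p div 4" and "s = p mod 4"
  then have p: "p = 4 * q + s" "s < 4" by simp_all
  with assms show "j \<le> p div 4" "p div 4 < n"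
    unfolding q_def [symmetric] by linarith+
  with p assms have "4 * j + r + m - 1 - p = 4 * (j + n - 1 - q) + (3 - s)"
    unfolding q_def [symmetric] by linarith
  then show "tm_bit p = tm_bit (4 * j + r + m - 1 - p) \<longleftrightarrow>
      tm_bit (p div 4) = tm_bit (j + n - 1 - p div 4)"
    using tm_bit_reflect4 [OF p(2), of q "j + n - 1 - q"] p(1)
    unfolding q_def [symmetric] by simp
qed

lemma tm_pal_mult4_iff:
  assumes "r < 4" "m + r = 4 * n"
  shows "tm_pal (4 * j + r) m \<longleftrightarrow> tm_pal j n"
proof
  assume pal: "tm_pal (4 * j + r) m"
  show "tm_pal j n"
  proof (rule tm_palI)
    fix q assume q: "j \<le> q" "q < n"
    show "tm_bit q = tm_bit (j + n - 1 - q)"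
    proof (cases "q = j \<and> j + 1 = n")
      case True
      \<comment> \<open>the block q may miss the factor, but then it is its own mirror image\<close>
      then show ?thesis by simp
    next
      case False
      obtain p where p: "4 * j + r \<le> p" "p < m" "p div 4 = q"
      proof (cases "q = j")
        case True
        with False q assms have "4 * j + r < m" by linarith
        with True assms show thesis by (intro that [of "4 * j + r"]) simp_all
      next
        case False
        with q assms have "4 * j + r \<le> 4 * q" "4 * q < m" by linarith+
        then show thesis by (intro that [of "4 * q"]) simp_all
      qed
      with tm_palD [OF pal, of p] tm_bit_mirror_blocks (3) [OF assms p(1,2)] show ?thesis
        by metis
    qed
  qed
next
  assume pal: "tm_pal j n"
  show "tm_pal (4 * j + r) m"
  proof (rule tm_palI)
    fix p assume "4 * j + r \<le> p" "p < m"
    with tm_palD [OF pal, of "p div 4"] tm_bit_mirror_blocks [OF assms this]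
    show "tm_bit p = tm_bit (4 * j + r + m - 1 - p)"
      by metis
  qed
qed

section \<open>The recurrence for the palindromic length\<close>

lemma PPL_t_eq_pal_length: "PPL_t n = pal_length (map tm_letter [0..<n])"
  unfolding PPL_t_def pal_length_def pal_factorization_def tm_prefix_eq ..

lemma PPL_t_le_pal:
  assumes "i \<le> m" "tm_pal i m"
  shows "PPL_t m \<le> PPL_t i + 1"
proof (cases "i = m")
  case True
  then show ?thesis by simp
next
  case False
  have "map tm_letter [0..<m] = map tm_letter [0..<i] @ map tm_letter [i..<m]"
    using assms(1) by (metis le0 map_append upt_add_eq_append le_add_diff_inverse)
  moreover have "map tm_letter [i..<m] \<noteq> []" "palindrome (map tm_letter [i..<m])"
    using False assms palindrome_tm_factor by auto
  ultimately show ?thesis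
    unfolding PPL_t_eq_pal_length by (metis pal_length_append_palindrome)
qed

lemma PPL_t_last_pal:
  assumes "0 < m"
  obtains i where "i < m" "tm_pal i m" "PPL_t m = PPL_t i + 1"
proof -
  from assms have "map tm_letter [0..<m] \<noteq> []" by simp
  then obtain u s where us: "map tm_letter [0..<m] = u @ s" "s \<noteq> []" "palindrome s"
    "pal_length (map tm_letter [0..<m]) = pal_length u + 1"
    by (rule pal_length_last_palindrome)
  define i where "i = length u"
  have "m = i + length s"
    using arg_cong [OF us(1), of length] unfolding i_def by simp
  with us(2) have "i < m" by simp
  have "u = map tm_letter [0..<i]"
    using arg_cong [OF us(1), of "take i"] \<open>i < m\<close> unfolding i_def by (simp add: take_map)
  moreover have "s = map tm_letter [i..<m]"
    using arg_cong [OF us(1), of "drop i"] unfolding i_def by (simp add: drop_map)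
  ultimately show thesis
    using that \<open>i < m\<close> us(3,4) palindrome_tm_factor unfolding PPL_t_eq_pal_length by metis
qed

lemma PPL_t_le_inner_pal: "i < m \<Longrightarrow> tm_pal i (Suc m) \<Longrightarrow> PPL_t m \<le> PPL_t (Suc i) + 1"
  by (rule PPL_t_le_pal) (simp_all add: tm_pal_central)

lemma PPL_t_Suc_le: "PPL_t (Suc m) \<le> PPL_t m + 1"
  by (rule PPL_t_le_pal) (simp_all add: tm_pal_Suc)

lemma PPL_t_le_Suc: "PPL_t m \<le> PPL_t (Suc m) + 1"
proof -
  have "0 < Suc m" by simp
  then obtain i where i: "i < Suc m" "tm_pal i (Suc m)" "PPL_t (Suc m) = PPL_t i + 1"
    by (rule PPL_t_last_pal)
  show ?thesis
  proof (cases "i = m")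
    case True
    with i show ?thesis by simp
  next
    case False
    with i have "PPL_t m \<le> PPL_t (Suc i) + 1"
      by (intro PPL_t_le_inner_pal) simp_all
    with i PPL_t_Suc_le [of i] show ?thesis by simp
  qed
qed

lemma PPL_t_lift_le:
  assumes "tm_pal j n" "r < 4" "m + r = 4 * n" "4 * j + r \<le> m"
  shows "PPL_t m \<le> PPL_t (4 * j + r) + 1"
proof -
  from assms(1-3) have "tm_pal (4 * j + r) m"
    using tm_pal_mult4_iff by blast
  with assms(4) show ?thesis
    by (rule PPL_t_le_pal)
qed

lemma PPL_t_last_pal_cases:
  assumes "0 < m"
  obtains (single) "PPL_t m = PPL_t (m - 1) + 1"
    | (three) i where "m = i + 3" "i mod 4 = 2 \<or> i mod 4 = 3" "PPL_t m = PPL_t i + 1"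
    | (lifted) k r n where "r < 4" "m + r = 4 * n" "4 * k + r < m" "tm_pal k n"
        "PPL_t m = PPL_t (4 * k + r) + 1"
proof -
  obtain i where i: "i < m" "tm_pal i m" "PPL_t m = PPL_t i + 1"
    using assms by (rule PPL_t_last_pal)
  from i(2,1) show thesis
  proof (cases rule: tm_pal_cases)
    case 1
    with i single show thesis by simp
  next
    case 2
    with i three show thesis by blast
  next
    case 3
    define k r where "k = i div 4" and "r = i mod 4"
    then have kr: "i = 4 * k + r" "r < 4" by simp_all
    with 3 have "\<exists>n. m + r = 4 * n" by presburger
    then obtain n where "m + r = 4 * n" by blast
    moreover from this kr i(2) have "tm_pal k n"
      using tm_pal_mult4_iff by blast
    ultimately show thesis
      using lifted kr i by blast
  qed
qed

definition PPL_t_recurrence :: "nat \<Rightarrow> bool" where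
  "PPL_t_recurrence n \<longleftrightarrow>
     PPL_t (4 * n) = PPL_t n \<and>
     PPL_t (4 * n + 1) = PPL_t n + 1 \<and>
     PPL_t (4 * n + 2) = min (PPL_t n) (PPL_t (n + 1)) + 2 \<and>
     PPL_t (4 * n + 3) = PPL_t (n + 1) + 1"

lemma PPL_t_4n:
  assumes IH: "\<And>k. k < n \<Longrightarrow> PPL_t_recurrence k"
  shows "PPL_t (4 * n) = PPL_t n"
proof (cases "n = 0")
  case True
  then show ?thesis by simp
next
  case False
  then have "0 < n" by simp
  then obtain j where j: "j < n" "tm_pal j n" "PPL_t n = PPL_t j + 1"
    by (rule PPL_t_last_pal)
  then have "PPL_t (4 * n) \<le> PPL_t (4 * j) + 1"
    using PPL_t_lift_le [of j n 0 "4 * n"] by simp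
  with j IH [OF \<open>j < n\<close>] have upper: "PPL_t (4 * n) \<le> PPL_t n"
    by (simp add: PPL_t_recurrence_def)
  from False have "0 < 4 * n" by simp
  then have "PPL_t n \<le> PPL_t (4 * n)"
  proof (cases rule: PPL_t_last_pal_cases)
    case single
    from False obtain n0 where n0: "n = n0 + 1" by (cases n) auto
    then have "4 * n - 1 = 4 * n0 + 3" by simp
    with single have "PPL_t (4 * n) = PPL_t (4 * n0 + 3) + 1" by simp
    also have "PPL_t (4 * n0 + 3) = PPL_t n + 1"
      using IH [of n0] n0 by (simp add: PPL_t_recurrence_def)
    finally show ?thesis by simp
  next
    case three
    then show ?thesis by presburger
  next
    case (lifted k r n')
    then have "r = 0" "n' = n" "k < n" by presburger+
    with lifted have "PPL_t n \<le> PPL_t k + 1"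
      by (intro PPL_t_le_pal) simp_all
    with lifted \<open>r = 0\<close> IH [OF \<open>k < n\<close>] show ?thesis
      by (simp add: PPL_t_recurrence_def)
  qed
  with upper show ?thesis by simp
qed

lemma PPL_t_4n1:
  assumes IH: "\<And>k. k < n \<Longrightarrow> PPL_t_recurrence k"
    and rec0: "PPL_t (4 * n) = PPL_t n"
  shows "PPL_t (4 * n + 1) = PPL_t n + 1"
proof -
  have upper: "PPL_t (4 * n + 1) \<le> PPL_t n + 1"
    using PPL_t_Suc_le [of "4 * n"] rec0 by simp
  have "0 < 4 * n + 1" by simp
  then have "PPL_t n + 1 \<le> PPL_t (4 * n + 1)"
  proof (cases rule: PPL_t_last_pal_cases)
    case single
    with rec0 show ?thesis by simp
  next
    case (three i)
    then have "\<exists>n0. n = n0 + 1 \<and> i = 4 * n0 + 2" by presburger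
    then obtain n0 where n0: "n = n0 + 1" "i = 4 * n0 + 2" by blast
    with IH [of n0] have "PPL_t i = min (PPL_t n0) (PPL_t n) + 2"
      by (simp add: PPL_t_recurrence_def)
    moreover have "PPL_t n \<le> PPL_t n0 + 1"
      using PPL_t_Suc_le [of n0] n0 by simp
    ultimately show ?thesis using three by simp
  next
    case (lifted k r n')
    then have "r = 3" "n' = Suc n" "k < n" by presburger+
    with lifted have "PPL_t n \<le> PPL_t (Suc k) + 1"
      by (intro PPL_t_le_inner_pal) simp_all
    with lifted \<open>r = 3\<close> IH [OF \<open>k < n\<close>] show ?thesis
      by (simp add: PPL_t_recurrence_def)
  qed
  with upper show ?thesis by simp
qed

lemma PPL_t_4n2_le:
  assumes IH: "\<And>k. k < n \<Longrightarrow> PPL_t_recurrence k"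
    and rec1: "PPL_t (4 * n + 1) = PPL_t n + 1"
  shows "PPL_t (4 * n + 2) \<le> min (PPL_t n) (PPL_t (n + 1)) + 2"
proof -
  have upper1: "PPL_t (4 * n + 2) \<le> PPL_t n + 2"
    using PPL_t_Suc_le [of "4 * n + 1"] rec1 by simp
  have "0 < n + 1" by simp
  then obtain j where j: "j < n + 1" "tm_pal j (n + 1)" "PPL_t (n + 1) = PPL_t j + 1"
    by (rule PPL_t_last_pal)
  have "PPL_t (4 * n + 2) \<le> PPL_t (n + 1) + 2"
  proof (cases "j = n")
    case True
    with upper1 j show ?thesis by simp
  next
    case False
    with j have "j < n" by simp
    with j have "PPL_t (4 * n + 2) \<le> PPL_t (4 * j + 2) + 1"
      using PPL_t_lift_le [of j "n + 1" 2 "4 * n + 2"] by simp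
    with j IH [OF \<open>j < n\<close>] show ?thesis
      by (simp add: PPL_t_recurrence_def)
  qed
  with upper1 show ?thesis by simp
qed

lemma PPL_t_4n2:
  assumes IH: "\<And>k. k < n \<Longrightarrow> PPL_t_recurrence k"
    and rec1: "PPL_t (4 * n + 1) = PPL_t n + 1"
  shows "PPL_t (4 * n + 2) = min (PPL_t n) (PPL_t (n + 1)) + 2"
proof -
  have "0 < 4 * n + 2" by simp
  then have "min (PPL_t n) (PPL_t (n + 1)) + 2 \<le> PPL_t (4 * n + 2)"
  proof (cases rule: PPL_t_last_pal_cases)
    case single
    with rec1 show ?thesis by simp
  next
    case (three i)
    then have "\<exists>n0. n = n0 + 1 \<and> i = 4 * n0 + 3" by presburger
    then obtain n0 where n0: "n = n0 + 1" "i = 4 * n0 + 3" by blast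
    with IH [of n0] three show ?thesis
      by (simp add: PPL_t_recurrence_def)
  next
    case (lifted k r n')
    then have "r = 2" "n' = Suc n" "k < n" by presburger+
    with lifted have pal: "tm_pal k (Suc n)" by simp
    with \<open>k < n\<close> have "PPL_t n \<le> PPL_t (Suc k) + 1"
      by (rule PPL_t_le_inner_pal)
    moreover from pal \<open>k < n\<close> have "PPL_t (n + 1) \<le> PPL_t k + 1"
      by (intro PPL_t_le_pal) simp_all
    ultimately show ?thesis
      using lifted \<open>r = 2\<close> IH [OF \<open>k < n\<close>] by (simp add: PPL_t_recurrence_def)
  qed
  with PPL_t_4n2_le [OF IH rec1] show ?thesis by simp
qed

lemma PPL_t_4n3:
  assumes IH: "\<And>k. k < n \<Longrightarrow> PPL_t_recurrence k"
    and rec1: "PPL_t (4 * n + 1) = PPL_t n + 1"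
    and rec2: "PPL_t (4 * n + 2) = min (PPL_t n) (PPL_t (n + 1)) + 2"
  shows "PPL_t (4 * n + 3) = PPL_t (n + 1) + 1"
proof -
  have rec1_le: "PPL_t (4 * k + 1) = PPL_t k + 1" if "k \<le> n" for k
    using that IH [of k] rec1 by (cases "k = n") (simp_all add: PPL_t_recurrence_def)
  have "0 < n + 1" by simp
  then obtain j where j: "j < n + 1" "tm_pal j (n + 1)" "PPL_t (n + 1) = PPL_t j + 1"
    by (rule PPL_t_last_pal)
  then have "PPL_t (4 * n + 3) \<le> PPL_t (4 * j + 1) + 1"
    using PPL_t_lift_le [of j "n + 1" 1 "4 * n + 3"] by simp
  with j rec1_le [of j] have upper: "PPL_t (4 * n + 3) \<le> PPL_t (n + 1) + 1"
    by simp
  have "0 < 4 * n + 3" by simp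
  then have "PPL_t (n + 1) + 1 \<le> PPL_t (4 * n + 3)"
  proof (cases rule: PPL_t_last_pal_cases)
    case single
    with rec2 PPL_t_Suc_le [of n] show ?thesis by simp
  next
    case three
    then show ?thesis by presburger
  next
    case (lifted k r n')
    then have "r = 1" "n' = n + 1" "k \<le> n" by presburger+
    with lifted have "PPL_t (n + 1) \<le> PPL_t k + 1"
      by (intro PPL_t_le_pal) simp_all
    with lifted \<open>r = 1\<close> rec1_le [OF \<open>k \<le> n\<close>] show ?thesis
      by simp
  qed
  with upper show ?thesis by simp
qed

lemma PPL_t_recurrence_holds: "PPL_t_recurrence n"
proof (induction n rule: less_induct)
  case (less n)
  have rec0: "PPL_t (4 * n) = PPL_t n"
    using less by (rule PPL_t_4n)
  have rec1: "PPL_t (4 * n + 1) = PPL_t n + 1"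
    using less rec0 by (rule PPL_t_4n1)
  have rec2: "PPL_t (4 * n + 2) = min (PPL_t n) (PPL_t (n + 1)) + 2"
    using less rec1 by (rule PPL_t_4n2)
  have rec3: "PPL_t (4 * n + 3) = PPL_t (n + 1) + 1"
    using less rec1 rec2 by (rule PPL_t_4n3)
  from rec0 rec1 rec2 rec3 show ?case
    unfolding PPL_t_recurrence_def by blast
qed

lemma d_t_4n:
  "[d_t (4 * n), d_t (4 * n + 1), d_t (4 * n + 2), d_t (4 * n + 3)]
     = [1, 1 + min 0 (d_t n), max 0 (d_t n) - 1, -1]"
proof -
  have e: "4 * n + 1 + 1 = 4 * n + 2" "4 * n + 2 + 1 = 4 * n + 3" "4 * n + 3 + 1 = 4 * (n + 1)"
    by simp_all
  have "PPL_t (4 * n) = PPL_t n" "PPL_t (4 * n + 1) = PPL_t n + 1"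
    "PPL_t (4 * n + 2) = min (PPL_t n) (PPL_t (n + 1)) + 2" "PPL_t (4 * n + 3) = PPL_t (n + 1) + 1"
    "PPL_t (4 * (n + 1)) = PPL_t (n + 1)"
    using PPL_t_recurrence_holds [of n] PPL_t_recurrence_holds [of "n + 1"]
    unfolding PPL_t_recurrence_def by blast+
  with PPL_t_Suc_le [of n] PPL_t_le_Suc [of n] show ?thesis
    unfolding d_t_def e by (auto simp: min_def max_def)
qed

theorem corollary13:
  shows "(\<forall>n. d_t n \<in> {-1, 0, 1})
       \<and> d_t 0 = 1
       \<and> (\<forall>n. [d_t (4*n), d_t (4*n+1), d_t (4*n+2), d_t (4*n+3)] = delta (d_t n))"
proof -
  have range: "d_t n \<in> {-1, 0, 1}" for n
    using PPL_t_Suc_le [of n] PPL_t_le_Suc [of n] unfolding d_t_def by auto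
  moreover have "d_t 0 = 1"
    using PPL_t_recurrence_holds [of 0] by (simp add: d_t_def PPL_t_recurrence_def)
  moreover have "[d_t (4*n), d_t (4*n+1), d_t (4*n+2), d_t (4*n+3)] = delta (d_t n)" for n
    using range [of n] unfolding d_t_4n by (auto simp: delta_def)
  ultimately show ?thesis by blast
qed

end
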